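(* Let $f$ satisfy (Ha), let $\varphi$ be an anisotropy in $\mathbb R^n$, let $r_0>0$, $\vartheta>0$, and let $F\in\mathcal S^*$ satisfy $P(F,B_r(x))\ge\vartheta r^{n-1}$ for all $x\in\partial F$ and $r\in(0,r_0]$. Then for every measurable $E\subset\mathbb R^n$ and all $p,\ell>0$, $$|E\Delta F|\le\begin{cases}\dfrac{cp^n\ell^n}{r_0^{n-1}}P_\varphi(F)+\dfrac1{f(p)}\displaystyle\int_{E\Delta F}f\big(d_F(x)/\ell\big)dx & \text{if } \ell>r_0,\ p\ell>r_0,\\[2mm] cp^n\ell\,P_\varphi(F)+\dfrac1{f(p)}\displaystyle\int_{E\Delta F}f\big(d_F(x)/\ell\big)dx & \text{if } \ell\in(0,r_0],\ p\ell>r_0,\\[2mm] cp\ell\,P_\varphi(F)+\dfrac1{f(p)}\displaystyle\int_{E\Delta F}f\big(d_F(x)/\ell\big)dx & \text{if } p\ell\in(0,r_0],\end{cases}$$ where $c=\frac{10^n\omega_n}{c_\varphi\vartheta}$.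
   Context: Let $n\ge2$. An anisotropy is a positively one-homogeneous, even, convex function $\varphi:\mathbb R^n\to[0,+\infty)$ equivalent to the Euclidean norm; $\varphi^o(\eta)=\sup\{\xi\cdot\eta:\varphi(\xi)=1\}$ and $c_\varphi>0$ is a constant with $c_\varphi|\xi|\le\varphi^o(\xi)$ for all $\xi$. $P_\varphi(F)=\int_{\partial^*F}\varphi^o(\nu_F)d\mathcal H^{n-1}$; $P(F,A)$ is the Euclidean perimeter of $F$ in $A$. $\omega_n$ is the volume of the unit ball, $B_r(x)$ the open Euclidean ball. $\mathcal S=\{E:|E|<+\infty,\ x\in E\iff\lim_{\rho\to0^+}\rho^{-n}|B_\rho(x)\setminus E|=0\}$, $\mathcal S^*=\mathcal S\cap BV(\mathbb R^n;\{0,1\})$. $d_F=\mathrm{dist}(\cdot,\partial F)$. (Ha): $f:\mathbb R\to\mathbb R$ strictly increasing, continuous, surjective, odd. *)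

theory Defs
  imports "HOL-Analysis.Analysis"
begin

definition Ha :: "(real \<Rightarrow> real) \<Rightarrow> bool" where
  "Ha f \<longleftrightarrow> strict_mono f \<and> continuous_on UNIV f \<and> surj f \<and> (\<forall>x. f (- x) = - f x)"

definition anisotropy :: "('a::euclidean_space \<Rightarrow> real) \<Rightarrow> bool" where
  "anisotropy \<phi> \<longleftrightarrow>
     (\<forall>t x. t > 0 \<longrightarrow> \<phi> (t *\<^sub>R x) = t * \<phi> x) \<and>
     (\<forall>x. \<phi> (- x) = \<phi> x) \<and>
     convex_on UNIV \<phi> \<and>
     (\<forall>x. \<phi> x \<ge> 0) \<and>
     (\<exists>a b. 0 < a \<and> 0 < b \<and> (\<forall>x. a * norm x \<le> \<phi> x \<and> \<phi> x \<le> b * norm x))"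

definition polar :: "('a::euclidean_space \<Rightarrow> real) \<Rightarrow> 'a \<Rightarrow> real" where
  "polar \<phi> \<eta> = Sup {\<xi> \<bullet> \<eta> | \<xi>. \<phi> \<xi> = 1}"

definition C1c_fields :: "'a::euclidean_space set \<Rightarrow> ('a \<Rightarrow> 'a) set" where
  "C1c_fields A = {T. (\<forall>x. T differentiable (at x)) \<and>
       (\<forall>v. continuous_on UNIV (\<lambda>x. frechet_derivative T (at x) v)) \<and>
       compact (closure {x. T x \<noteq> 0}) \<and> closure {x. T x \<noteq> 0} \<subseteq> A}"

definition divergence :: "('a::euclidean_space \<Rightarrow> 'a) \<Rightarrow> 'a \<Rightarrow> real" where
  "divergence T x = (\<Sum>i\<in>Basis. frechet_derivative T (at x) i \<bullet> i)"

definition perimeter_in :: "'a::euclidean_space set \<Rightarrow> 'a set \<Rightarrow> ennreal" where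
  "perimeter_in F A = (SUP T\<in>{T \<in> C1c_fields A. \<forall>x. norm (T x) \<le> 1}.
       ennreal (integral F (divergence T)))"

text \<open>Anisotropic perimeter, via the variational formula
  sup { int_F div T : T in C^1_c, phi(T) <= 1 } = int_{reduced boundary} phi^o(nu) dH^{n-1}.\<close>
definition aniso_perimeter :: "('a::euclidean_space \<Rightarrow> real) \<Rightarrow> 'a set \<Rightarrow> ennreal" where
  "aniso_perimeter \<phi> F = (SUP T\<in>{T \<in> C1c_fields UNIV. \<forall>x. \<phi> (T x) \<le> 1}.
       ennreal (integral F (divergence T)))"

text \<open>The class S: finite-measure sets normalised by Lebesgue density one points.\<close>
definition classS :: "'a::euclidean_space set set" where
  "classS = {E. E \<in> sets lebesgue \<and> emeasure lebesgue E < \<infinity> \<and>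
     (\<forall>x. x \<in> E \<longleftrightarrow>
        ((\<lambda>\<rho>. measure lebesgue (ball x \<rho> - E) / \<rho> ^ DIM('a)) \<longlongrightarrow> 0) (at_right 0))}"

definition classS_star :: "'a::euclidean_space set set" where
  "classS_star = {E \<in> classS. perimeter_in E UNIV < \<infinity>}"

text \<open>Integrand f(d_F(x)/l), with dist(x, empty set) = +infinity (and f(+infinity) = +infinity).\<close>
definition f_dist :: "(real \<Rightarrow> real) \<Rightarrow> 'a::euclidean_space set \<Rightarrow> real \<Rightarrow> 'a \<Rightarrow> ennreal" where
  "f_dist f F l x = (if frontier F = {} then \<infinity> else ennreal (f (infdist x (frontier F) / l)))"

end

theory Submission
  imports Defs
begin

text \<open>Split \<open>E \<Delta> F\<close> at distance \<open>p l\<close> from \<open>\<partial>F\<close>. Farther away \<open>f(d\<^sub>F/l) \<ge> f(p)\<close>, so Markov's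
  inequality bounds that part by the integral term. The \<open>p l\<close>-neighbourhood of \<open>\<partial>F\<close> is covered
  by the balls of radius \<open>3 p l\<close> around a maximal \<open>2\<rho>\<close>-separated subset of \<open>\<partial>F\<close>, for any
  \<open>\<rho> \<le> min r\<^sub>0 (p l)\<close>; the balls of radius \<open>\<rho>\<close> around these points are disjoint, so the density
  bound \<open>P(F, B\<^sub>\<rho>(x)) \<ge> \<theta> \<rho>\<^sup>n\<^sup>-\<^sup>1\<close> leaves room for at most \<open>P(F) / (\<theta> \<rho>\<^sup>n\<^sup>-\<^sup>1)\<close> of them.
  Finally \<open>c\<^sub>\<phi> P(F) \<le> P\<^sub>\<phi>(F)\<close>, because \<open>c\<^sub>\<phi> |\<cdot>| \<le> \<phi>\<degree>\<close> forces \<open>\<phi> \<le> |\<cdot>| / c\<^sub>\<phi>\<close>. The three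
  cases correspond to the choices \<open>\<rho> = r\<^sub>0\<close> and \<open>\<rho> = p l\<close>.\<close>

section \<open>Anisotropies\<close>

lemma convex_sublevel_set:
  assumes "convex_on UNIV g"
  shows "convex {x. g x \<le> r}"
  unfolding convex_alt
proof (intro ballI allI impI)
  fix x y and u :: real
  assume "x \<in> {x. g x \<le> r}" "y \<in> {x. g x \<le> r}" "0 \<le> u \<and> u \<le> 1"
  then have "g ((1 - u) *\<^sub>R x + u *\<^sub>R y) \<le> (1 - u) * g x + u * g y"
    "(1 - u) * g x + u * g y \<le> (1 - u) * r + u * r"
    using convex_onD[OF assms, of u x y] by (auto intro!: add_mono mult_left_mono)
  then show "(1 - u) *\<^sub>R x + u *\<^sub>R y \<in> {x. g x \<le> r}" by (simp add: algebra_simps)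
qed

lemma anisotropy_zero: "anisotropy \<phi> \<Longrightarrow> \<phi> 0 = 0"
  unfolding anisotropy_def by (metis mult_zero_right norm_zero order_antisym)

lemma anisotropy_continuous: "anisotropy \<phi> \<Longrightarrow> continuous_on UNIV \<phi>"
  unfolding anisotropy_def by (auto intro: convex_on_continuous)

text \<open>If \<open>|\<xi>| < c\<close>, a point \<open>t \<xi>\<close> with \<open>t > 1\<close> and \<open>t |\<xi>| < c\<close> lies outside the convex body
  \<open>{\<phi> \<le> 1}\<close>, and the normal \<open>\<eta>\<close> of a hyperplane separating the two has
  \<open>polar \<phi> \<eta> < c |\<eta>|\<close>.\<close>
lemma norm_ge_if_anisotropy_eq_1:
  fixes \<phi> :: "'a::euclidean_space \<Rightarrow> real"
  assumes an: "anisotropy \<phi>" and pol: "\<forall>\<eta>. c * norm \<eta> \<le> polar \<phi> \<eta>" and \<xi>: "\<phi> \<xi> = 1"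
  shows "c \<le> norm \<xi>"
proof (rule ccontr)
  assume "\<not> c \<le> norm \<xi>"
  moreover have "\<xi> \<noteq> 0" using \<xi> anisotropy_zero[OF an] by auto
  ultimately obtain t where t: "1 < t" "t * norm \<xi> < c"
    by (intro that[of "(1 + c / norm \<xi>) / 2"]) (auto simp: field_simps)
  define K where "K = {x. \<phi> x \<le> 1}"
  have "convex K" unfolding K_def using an by (auto intro: convex_sublevel_set simp: anisotropy_def)
  moreover have "closed K" unfolding K_def
    by (intro closed_Collect_le anisotropy_continuous[OF an] continuous_on_const)
  moreover have "\<phi> (t *\<^sub>R \<xi>) = t" using an t \<xi> by (simp add: anisotropy_def)
  then have "t *\<^sub>R \<xi> \<notin> K" using t unfolding K_def by simp
  ultimately obtain a b where ab: "a \<bullet> (t *\<^sub>R \<xi>) < b" "\<forall>x\<in>K. b < a \<bullet> x"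
    using separating_hyperplane_closed_point by blast
  have "polar \<phi> (- a) \<le> - b"
    unfolding polar_def
  proof (rule cSup_least)
    show "{\<zeta> \<bullet> - a |\<zeta>. \<phi> \<zeta> = 1} \<noteq> {}" using \<xi> by blast
    show "x \<le> - b" if "x \<in> {\<zeta> \<bullet> - a |\<zeta>. \<phi> \<zeta> = 1}" for x
      using that ab(2) unfolding K_def by (auto simp: inner_commute less_imp_le)
  qed
  also have "- b < - a \<bullet> (t *\<^sub>R \<xi>)" using ab(1) by simp
  also have "\<dots> \<le> norm (- a) * norm (t *\<^sub>R \<xi>)" by (rule norm_cauchy_schwarz)
  also have "\<dots> \<le> norm (- a) * c" using t by (intro mult_left_mono) auto
  finally show False using pol by (metis mult.commute not_le)
qed

lemma anisotropy_le_norm_divide: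
  fixes \<phi> :: "'a::euclidean_space \<Rightarrow> real"
  assumes an: "anisotropy \<phi>" and c: "c > 0" and pol: "\<forall>\<eta>. c * norm \<eta> \<le> polar \<phi> \<eta>"
  shows "\<phi> x \<le> norm x / c"
proof (cases "x = 0")
  case True
  then show ?thesis using anisotropy_zero[OF an] by simp
next
  case False
  with an have pos: "\<phi> x > 0"
    unfolding anisotropy_def by (metis less_le_trans mult_pos_pos zero_less_norm_iff)
  with an have "\<phi> ((1 / \<phi> x) *\<^sub>R x) = 1" by (simp add: anisotropy_def)
  then have "c \<le> norm ((1 / \<phi> x) *\<^sub>R x)" by (rule norm_ge_if_anisotropy_eq_1[OF an pol])
  then show ?thesis using pos c by (simp add: field_simps)
qed

section \<open>Compactly supported fields and the perimeter\<close>

lemma frechet_derivative_add: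
  assumes "f differentiable (at x)" "g differentiable (at x)"
  shows "frechet_derivative (\<lambda>x. f x + g x) (at x) =
    (\<lambda>v. frechet_derivative f (at x) v + frechet_derivative g (at x) v)"
  using assms by (intro frechet_derivative_at[symmetric] has_derivative_add)
    (simp_all add: frechet_derivative_works)

lemma frechet_derivative_scaleR:
  assumes "f differentiable (at x)"
  shows "frechet_derivative (\<lambda>x. c *\<^sub>R f x) (at x) = (\<lambda>v. c *\<^sub>R frechet_derivative f (at x) v)"
  using assms by (intro frechet_derivative_at[symmetric] has_derivative_scaleR_right)
    (simp add: frechet_derivative_works)

lemma divergence_add:
  assumes "T1 differentiable (at x)" "T2 differentiable (at x)"
  shows "divergence (\<lambda>x. T1 x + T2 x) x = divergence T1 x + divergence T2 x"
  using assms by (simp add: divergence_def frechet_derivative_add inner_add_left sum.distrib)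

lemma divergence_scaleR:
  assumes "T differentiable (at x)"
  shows "divergence (\<lambda>x. c *\<^sub>R T x) x = c * divergence T x"
  using assms by (simp add: divergence_def frechet_derivative_scaleR sum_distrib_left)

lemma C1c_fields_mono: "A \<subseteq> B \<Longrightarrow> C1c_fields A \<subseteq> C1c_fields B"
  unfolding C1c_fields_def by auto

lemma compact_closure_subset:
  fixes A B :: "'a::heine_borel set"
  shows "compact (closure B) \<Longrightarrow> A \<subseteq> B \<Longrightarrow> compact (closure A)"
  by (simp add: compact_closure bounded_subset)

lemma C1c_fields_add:
  assumes T1: "T1 \<in> C1c_fields A" and T2: "T2 \<in> C1c_fields B"
  shows "(\<lambda>x. T1 x + T2 x) \<in> C1c_fields (A \<union> B)"
proof -
  let ?S = "closure {x. T1 x + T2 x \<noteq> 0}"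
  and ?S1 = "closure {x. T1 x \<noteq> 0}" and ?S2 = "closure {x. T2 x \<noteq> 0}"
  have diff: "\<And>x. T1 differentiable (at x)" "\<And>x. T2 differentiable (at x)"
    and cont: "\<And>v. continuous_on UNIV (\<lambda>x. frechet_derivative T1 (at x) v)"
      "\<And>v. continuous_on UNIV (\<lambda>x. frechet_derivative T2 (at x) v)"
    and supp: "compact ?S1" "?S1 \<subseteq> A" "compact ?S2" "?S2 \<subseteq> B"
    using assms unfolding C1c_fields_def by blast+
  have sub: "{x. T1 x + T2 x \<noteq> 0} \<subseteq> {x. T1 x \<noteq> 0} \<union> {x. T2 x \<noteq> 0}" by auto
  then have "?S \<subseteq> ?S1 \<union> ?S2" by (metis closure_Un closure_mono)
  moreover have "compact ?S"
    using compact_closure_subset[OF _ sub] supp by (simp add: closure_Un compact_Un)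
  moreover have "continuous_on UNIV (\<lambda>x. frechet_derivative (\<lambda>x. T1 x + T2 x) (at x) v)" for v
    unfolding frechet_derivative_add[OF diff] by (intro continuous_on_add cont)
  moreover have "(\<lambda>x. T1 x + T2 x) differentiable (at x)" for x
    using diff by (rule differentiable_add)
  ultimately show ?thesis
    using supp unfolding C1c_fields_def by blast
qed

lemma C1c_fields_scaleR:
  assumes T: "T \<in> C1c_fields A"
  shows "(\<lambda>x. c *\<^sub>R T x) \<in> C1c_fields A"
proof -
  let ?S = "closure {x. c *\<^sub>R T x \<noteq> 0}" and ?S1 = "closure {x. T x \<noteq> 0}"
  have diff: "\<And>x. T differentiable (at x)" and supp: "compact ?S1" "?S1 \<subseteq> A"
    using assms unfolding C1c_fields_def by auto
  have sub: "{x. c *\<^sub>R T x \<noteq> 0} \<subseteq> {x. T x \<noteq> 0}" by auto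
  then have "?S \<subseteq> ?S1" by (rule closure_mono)
  moreover have "compact ?S" using compact_closure_subset[OF _ sub] supp by simp
  moreover have "continuous_on UNIV (\<lambda>x. frechet_derivative (\<lambda>x. c *\<^sub>R T x) (at x) v)" for v
    using assms unfolding C1c_fields_def frechet_derivative_scaleR[OF diff]
    by (auto intro: continuous_intros)
  moreover have "(\<lambda>x. c *\<^sub>R T x) differentiable (at x)" for x
    using diff by (rule differentiable_scaleR[OF differentiable_const])
  ultimately show ?thesis
    using supp unfolding C1c_fields_def by blast
qed

lemma continuous_on_divergence:
  assumes "T \<in> C1c_fields A"
  shows "continuous_on UNIV (divergence T)"
  using assms unfolding C1c_fields_def divergence_def[abs_def]
  by (intro continuous_intros) auto

lemma divergence_eq_0_outside_support:
  assumes "T \<in> C1c_fields A" "x \<notin> closure {x. T x \<noteq> 0}"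
  shows "divergence T x = 0"
proof -
  have "frechet_derivative T (at x) = frechet_derivative (\<lambda>x. 0) (at x)"
    by (rule frechet_derivative_transform_within_open[where X="- closure {x. T x \<noteq> 0}"])
       (use assms closure_subset[of "{x. T x \<noteq> 0}"] in \<open>auto simp: C1c_fields_def\<close>)
  then show ?thesis unfolding divergence_def by simp
qed

lemma integrable_divergence:
  assumes T: "T \<in> C1c_fields A" and F: "F \<in> sets lebesgue"
  shows "divergence T integrable_on F"
proof -
  have "compact (closure {x. T x \<noteq> 0})" using T unfolding C1c_fields_def by auto
  then obtain a where a: "closure {x. T x \<noteq> 0} \<subseteq> cbox (-a) a"
    using bounded_subset_cbox_symmetric compact_imp_bounded by blast
  have "divergence T absolutely_integrable_on cbox (-a) a"
    using continuous_on_divergence[OF T]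
    by (intro absolutely_integrable_continuous) (auto intro: continuous_on_subset)
  moreover have "(\<lambda>x. if x \<in> cbox (-a) a then divergence T x else 0) = divergence T"
    using a divergence_eq_0_outside_support[OF T] by (auto simp: fun_eq_iff)
  ultimately have "divergence T absolutely_integrable_on UNIV"
    using absolutely_integrable_restrict_UNIV by metis
  then show ?thesis
    using set_integrable_subset F absolutely_integrable_on_def by blast
qed

definition unit_C1c_fields :: "'a::euclidean_space set \<Rightarrow> ('a \<Rightarrow> 'a) set" where
  "unit_C1c_fields A = {T \<in> C1c_fields A. \<forall>x. norm (T x) \<le> 1}"

lemma perimeter_in_eq_SUP:
  "perimeter_in F A = (SUP T\<in>unit_C1c_fields A. ennreal (integral F (divergence T)))"
  unfolding perimeter_in_def unit_C1c_fields_def ..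

lemma zero_in_unit_C1c_fields: "(\<lambda>x. 0) \<in> unit_C1c_fields A"
  unfolding unit_C1c_fields_def C1c_fields_def by auto

lemma perimeter_in_mono: "A \<subseteq> B \<Longrightarrow> perimeter_in F A \<le> perimeter_in F B"
  unfolding perimeter_in_eq_SUP unit_C1c_fields_def
  by (rule SUP_subset_mono) (use C1c_fields_mono in auto)

lemma perimeter_in_ge:
  "T \<in> unit_C1c_fields A \<Longrightarrow> ennreal (integral F (divergence T)) \<le> perimeter_in F A"
  unfolding perimeter_in_eq_SUP by (rule SUP_upper)

lemma ennreal_add_le_if_le:
  assumes "ennreal a \<le> P" "ennreal b \<le> P" "ennreal (a + b) \<le> P"
  shows "ennreal a + ennreal b \<le> P"
  using assms by (cases "a < 0"; cases "b < 0") (simp_all add: ennreal_neg)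

text \<open>Admissible fields supported in disjoint sets add up to an admissible field; the separate
  bounds for each field take care of negative integrals, which \<open>ennreal\<close> truncates to \<open>0\<close>.\<close>
lemma perimeter_in_Un_disjoint:
  assumes F: "F \<in> sets lebesgue" and AB: "A \<inter> B = {}"
  shows "perimeter_in F A + perimeter_in F B \<le> perimeter_in F (A \<union> B)"
proof -
  have "ennreal (integral F (divergence T1)) + ennreal (integral F (divergence T2))
      \<le> perimeter_in F (A \<union> B)" if T1: "T1 \<in> unit_C1c_fields A" and T2: "T2 \<in> unit_C1c_fields B"
    for T1 T2
  proof (rule ennreal_add_le_if_le)
    have C1: "T1 \<in> C1c_fields A" and C2: "T2 \<in> C1c_fields B"
      using T1 T2 unfolding unit_C1c_fields_def by auto
    then have "closure {x. T1 x \<noteq> 0} \<subseteq> A" "closure {x. T2 x \<noteq> 0} \<subseteq> B"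
      unfolding C1c_fields_def by auto
    then have disj: "T1 x = 0 \<or> T2 x = 0" for x
      using AB closure_subset[of "{x. T1 x \<noteq> 0}"] closure_subset[of "{x. T2 x \<noteq> 0}"] by blast
    have "\<forall>x. norm (T1 x) \<le> 1" "\<forall>x. norm (T2 x) \<le> 1"
      using T1 T2 unfolding unit_C1c_fields_def by auto
    then have "norm (T1 x + T2 x) \<le> 1" for x
      using disj[of x] by auto
    then have "(\<lambda>x. T1 x + T2 x) \<in> unit_C1c_fields (A \<union> B)"
      using C1c_fields_add[OF C1 C2] unfolding unit_C1c_fields_def by blast
    moreover have "integral F (divergence (\<lambda>x. T1 x + T2 x))
        = integral F (divergence T1) + integral F (divergence T2)"
    proof -
      have "divergence (\<lambda>x. T1 x + T2 x) = (\<lambda>x. divergence T1 x + divergence T2 x)"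
        using C1 C2 unfolding C1c_fields_def by (auto simp: divergence_add)
      then show ?thesis
        using integrable_divergence[OF C1 F] integrable_divergence[OF C2 F] by (simp add: integral_add)
    qed
    ultimately show "ennreal (integral F (divergence T1) + integral F (divergence T2))
        \<le> perimeter_in F (A \<union> B)"
      by (metis perimeter_in_ge)
    show "ennreal (integral F (divergence T1)) \<le> perimeter_in F (A \<union> B)"
      using perimeter_in_ge[OF T1, of F] perimeter_in_mono[of A "A \<union> B" F] by simp
    show "ennreal (integral F (divergence T2)) \<le> perimeter_in F (A \<union> B)"
      using perimeter_in_ge[OF T2, of F] perimeter_in_mono[of B "A \<union> B" F] by simp
  qed
  moreover have "unit_C1c_fields A \<noteq> {}" "unit_C1c_fields B \<noteq> {}"
    using zero_in_unit_C1c_fields by auto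
  ultimately show ?thesis
    unfolding perimeter_in_eq_SUP[of F A] perimeter_in_eq_SUP[of F B]
    by (simp add: ennreal_SUP_add_left[symmetric] ennreal_SUP_add_right SUP_least)
qed

lemma perimeter_in_UN_disjoint:
  assumes F: "F \<in> sets lebesgue" and "finite X" and "disjoint_family_on B X"
  shows "(\<Sum>x\<in>X. perimeter_in F (B x)) \<le> perimeter_in F (\<Union>x\<in>X. B x)"
  using assms(2,3)
proof (induction X rule: finite_induct)
  case empty
  then show ?case by simp
next
  case (insert y X)
  then have disj: "B y \<inter> (\<Union>x\<in>X. B x) = {}"
    and IH: "(\<Sum>x\<in>X. perimeter_in F (B x)) \<le> perimeter_in F (\<Union>x\<in>X. B x)"
    by (auto simp: disjoint_family_on_def)
  have "(\<Sum>x\<in>insert y X. perimeter_in F (B x)) = perimeter_in F (B y) + (\<Sum>x\<in>X. perimeter_in F (B x))"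
    using insert.hyps by simp
  also have "\<dots> \<le> perimeter_in F (B y) + perimeter_in F (\<Union>x\<in>X. B x)"
    using IH by (rule add_left_mono)
  also have "\<dots> \<le> perimeter_in F (\<Union>x\<in>insert y X. B x)"
    using perimeter_in_Un_disjoint[OF F disj] by simp
  finally show ?case .
qed

lemma perimeter_in_le_aniso_perimeter:
  fixes \<phi> :: "'a::euclidean_space \<Rightarrow> real" and F :: "'a set"
  assumes an: "anisotropy \<phi>" and c: "c > 0" and pol: "\<forall>\<eta>. c * norm \<eta> \<le> polar \<phi> \<eta>"
  shows "ennreal c * perimeter_in F UNIV \<le> aniso_perimeter \<phi> F"
  unfolding perimeter_in_eq_SUP SUP_mult_left_ennreal
proof (rule SUP_least)
  fix T :: "'a \<Rightarrow> 'a" assume T: "T \<in> unit_C1c_fields UNIV"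
  then have C: "T \<in> C1c_fields UNIV" and unit: "\<And>x. norm (T x) \<le> 1"
    unfolding unit_C1c_fields_def by auto
  have "\<phi> (c *\<^sub>R T x) \<le> 1" for x
    using anisotropy_le_norm_divide[OF an c pol, of "c *\<^sub>R T x"] unit[of x] c by simp
  then have admissible: "(\<lambda>x. c *\<^sub>R T x) \<in> {T \<in> C1c_fields UNIV. \<forall>x. \<phi> (T x) \<le> 1}"
    using C1c_fields_scaleR[OF C] by blast
  have "divergence (\<lambda>x. c *\<^sub>R T x) = (\<lambda>x. c * divergence T x)"
    using C unfolding C1c_fields_def by (auto simp: divergence_scaleR)
  then have "ennreal c * ennreal (integral F (divergence T))
      = ennreal (integral F (divergence (\<lambda>x. c *\<^sub>R T x)))"
    using c by (simp add: ennreal_mult')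
  also have "\<dots> \<le> aniso_perimeter \<phi> F"
    unfolding aniso_perimeter_def using admissible by (rule SUP_upper)
  finally show "ennreal c * ennreal (integral F (divergence T)) \<le> aniso_perimeter \<phi> F" .
qed

section \<open>Covering the neighbourhood of the boundary\<close>

lemma maximal_separated_subset:
  fixes S :: "'a::metric_space set"
  assumes "r > 0"
    and bound: "\<And>X. finite X \<Longrightarrow> X \<subseteq> S \<Longrightarrow> pairwise (\<lambda>x y. r \<le> dist x y) X \<Longrightarrow> card X \<le> M"
  obtains X where "finite X" "X \<subseteq> S" "pairwise (\<lambda>x y. r \<le> dist x y) X" "S \<subseteq> (\<Union>x\<in>X. ball x r)"
proof -
  define sep where "sep X \<longleftrightarrow> finite X \<and> X \<subseteq> S \<and> pairwise (\<lambda>x y. r \<le> dist x y) X" for X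
  define Q where "Q k \<longleftrightarrow> (\<exists>X. sep X \<and> card X = k)" for k
  have "Q 0" unfolding Q_def sep_def by (intro exI[of _ "{}"]) simp
  moreover have Q_le: "Q k \<Longrightarrow> k \<le> M" for k using bound unfolding Q_def sep_def by blast
  ultimately have "Q (Greatest Q)" by (metis GreatestI_nat)
  then obtain X where X: "sep X" "card X = Greatest Q" unfolding Q_def by blast
  have "y \<in> (\<Union>x\<in>X. ball x r)" if "y \<in> S" for y
  proof (rule ccontr)
    assume "y \<notin> (\<Union>x\<in>X. ball x r)"
    then have "\<forall>x\<in>X. r \<le> dist x y" and "y \<notin> X" using \<open>r > 0\<close> by auto
    then have "sep (insert y X)"
      using X(1) \<open>y \<in> S\<close> unfolding sep_def by (auto simp: pairwise_insert dist_commute)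
    then have "card (insert y X) \<le> Greatest Q"
      using Q_le unfolding Q_def by (blast intro: Greatest_le_nat)
    then show False using X \<open>y \<notin> X\<close> unfolding sep_def by simp
  qed
  then show thesis using X(1) that unfolding sep_def by blast
qed

lemma infdist_less_imp_ex_dist_less:
  assumes "infdist x S < e" "S \<noteq> {}"
  shows "\<exists>y\<in>S. dist x y < e"
proof -
  have "bdd_below (dist x ` S)" by (meson bdd_below.I2 zero_le_dist)
  then show ?thesis using assms by (simp add: infdist_notempty cINF_less_iff)
qed

definition perimeter_density_bound :: "'a::euclidean_space set \<Rightarrow> real \<Rightarrow> real \<Rightarrow> bool" where
  "perimeter_density_bound F r0 \<theta> \<longleftrightarrow>
     (\<forall>x\<in>frontier F. \<forall>r\<in>{0<..r0}. perimeter_in F (ball x r) \<ge> ennreal (\<theta> * r ^ (DIM('a) - 1)))"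

lemma card_separated_frontier_le_perimeter:
  fixes F :: "'a::euclidean_space set"
  assumes F: "F \<in> sets lebesgue" and dens: "perimeter_density_bound F r0 \<theta>"
    and \<rho>: "0 < \<rho>" "\<rho> \<le> r0"
    and X: "finite X" "X \<subseteq> frontier F" "pairwise (\<lambda>x y. 2 * \<rho> \<le> dist x y) X"
  shows "of_nat (card X) * ennreal (\<theta> * \<rho> ^ (DIM('a) - 1)) \<le> perimeter_in F UNIV"
proof -
  have "disjoint_family_on (\<lambda>x. ball x \<rho>) X"
    unfolding disjoint_family_on_def
  proof (intro ballI impI equals0I)
    fix x y z assume "x \<in> X" "y \<in> X" "x \<noteq> y" "z \<in> ball x \<rho> \<inter> ball y \<rho>"
    then have "dist x y < 2 * \<rho>" "2 * \<rho> \<le> dist x y"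
      using X(3) dist_triangle_less_add[of x z \<rho> y \<rho>] by (auto simp: pairwise_def dist_commute)
    then show False by simp
  qed
  have "of_nat (card X) * ennreal (\<theta> * \<rho> ^ (DIM('a) - 1)) = (\<Sum>x\<in>X. ennreal (\<theta> * \<rho> ^ (DIM('a) - 1)))"
    by simp
  also have "\<dots> \<le> (\<Sum>x\<in>X. perimeter_in F (ball x \<rho>))"
    using dens \<rho> X(2) unfolding perimeter_density_bound_def by (intro sum_mono) auto
  also have "\<dots> \<le> perimeter_in F (\<Union>x\<in>X. ball x \<rho>)"
    by (rule perimeter_in_UN_disjoint) fact+
  also have "\<dots> \<le> perimeter_in F UNIV"
    by (rule perimeter_in_mono) simp
  finally show ?thesis .
qed

lemma emeasure_frontier_neighbourhood_le:
  fixes F :: "'a::euclidean_space set"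
  assumes F: "F \<in> sets lebesgue" and fin: "perimeter_in F UNIV < \<infinity>"
    and dens: "perimeter_density_bound F r0 \<theta>" and \<theta>: "\<theta> > 0"
    and \<rho>: "0 < \<rho>" "\<rho> \<le> r0" "\<rho> \<le> s" and ne: "frontier F \<noteq> {}"
  shows "emeasure lebesgue {x. infdist x (frontier F) < s}
    \<le> ennreal (unit_ball_vol DIM('a) * (3 * s) ^ DIM('a) / (\<theta> * \<rho> ^ (DIM('a) - 1)))
        * perimeter_in F UNIV"
proof -
  define q where "q = \<theta> * \<rho> ^ (DIM('a) - 1)"
  define V where "V = unit_ball_vol DIM('a) * (3 * s) ^ DIM('a)"
  define P where "P = enn2real (perimeter_in F UNIV)"
  have q: "q > 0" and V: "V \<ge> 0" and P: "perimeter_in F UNIV = ennreal P" "P \<ge> 0"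
    using \<theta> \<rho> fin by (simp_all add: q_def V_def P_def)
  have card_le: "real (card X) \<le> P / q"
    if "finite X" "X \<subseteq> frontier F" "pairwise (\<lambda>x y. 2 * \<rho> \<le> dist x y) X" for X
  proof -
    have "ennreal (real (card X) * q) \<le> ennreal P"
      using card_separated_frontier_le_perimeter[OF F dens \<rho>(1,2) that] q P
      by (simp add: q_def ennreal_mult ennreal_of_nat_eq_real_of_nat)
    then show ?thesis using q P by (simp add: field_simps)
  qed
  have card_bound: "card X \<le> nat \<lceil>P / q\<rceil>"
    if "finite X" "X \<subseteq> frontier F" "pairwise (\<lambda>x y. 2 * \<rho> \<le> dist x y) X" for X
    using card_le[OF that] by (simp add: le_nat_iff le_ceiling_iff)
  have "0 < 2 * \<rho>" using \<rho> by simp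
  then obtain X where X: "finite X" "X \<subseteq> frontier F" "pairwise (\<lambda>x y. 2 * \<rho> \<le> dist x y) X"
    and cover: "frontier F \<subseteq> (\<Union>x\<in>X. ball x (2 * \<rho>))"
    using card_bound by (rule maximal_separated_subset)
  have "{x. infdist x (frontier F) < s} \<subseteq> (\<Union>x\<in>X. ball x (3 * s))"
  proof
    fix z assume "z \<in> {x. infdist x (frontier F) < s}"
    then obtain y where "y \<in> frontier F" "dist z y < s"
      using infdist_less_imp_ex_dist_less ne by blast
    moreover obtain x where "x \<in> X" "dist x y < 2 * \<rho>" using cover calculation(1) by auto
    ultimately show "z \<in> (\<Union>x\<in>X. ball x (3 * s))"
      using \<rho> dist_triangle_less_add[of x y "2 * \<rho>" z s] by (force simp: dist_commute)
  qed
  then have "emeasure lebesgue {x. infdist x (frontier F) < s}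
      \<le> emeasure lebesgue (\<Union>x\<in>X. ball x (3 * s))"
    using X(1) by (intro emeasure_mono) auto
  also have "\<dots> \<le> (\<Sum>x\<in>X. emeasure lebesgue (ball x (3 * s)))"
    using X(1) by (intro emeasure_subadditive_finite) auto
  also have "\<dots> = ennreal (real (card X) * V)"
    using \<rho> V by (simp add: V_def emeasure_ball ennreal_mult ennreal_of_nat_eq_real_of_nat)
  also have "\<dots> \<le> ennreal (V / q * P)"
    using mult_right_mono[OF card_le[OF X] V] by (intro ennreal_leI) (simp add: mult.commute)
  also have "\<dots> = ennreal (V / q) * perimeter_in F UNIV"
    using q V P by (simp add: ennreal_mult[symmetric])
  finally show ?thesis unfolding V_def q_def .
qed

lemma borel_measurable_f_dist:
  assumes "continuous_on UNIV f"
  shows "f_dist f F l \<in> borel_measurable lebesgue"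
proof (cases "frontier F = {}")
  case False
  have "continuous_on UNIV (\<lambda>x. f (infdist x (frontier F) / l))"
    unfolding divide_inverse by (rule continuous_on_compose2[OF assms]) (auto intro!: continuous_intros)
  then have "(\<lambda>x. f (infdist x (frontier F) / l)) \<in> borel_measurable lebesgue"
    using continuous_imp_measurable_on_sets_lebesgue[of UNIV] by (simp add: lebesgue_on_UNIV_eq)
  then show ?thesis using False unfolding f_dist_def by simp
qed (simp add: f_dist_def[abs_def])

lemma emeasure_le_sublevel_plus_Markov:
  assumes g: "g \<in> borel_measurable M" and D: "D \<in> sets M" and c: "c > 0"
  shows "emeasure M D \<le> emeasure M {x\<in>space M. g x < ennreal c} + ennreal (1 / c) * (\<integral>\<^sup>+x\<in>D. g x \<partial>M)"
proof -
  let ?L = "{x\<in>space M. g x < ennreal c}" and ?U = "{x\<in>D. 1 \<le> ennreal (1 / c) * g x}"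
  have "1 \<le> ennreal (1 / c) * g x" if "ennreal c \<le> g x" for x
  proof -
    have "ennreal (1 / c) * ennreal c = 1" using c by (simp flip: ennreal_mult)
    then show ?thesis using mult_left_mono[OF that, of "ennreal (1 / c)"] by simp
  qed
  then have "D \<subseteq> ?L \<union> ?U" using sets.sets_into_space[OF D] by (force simp: not_less)
  then have "emeasure M D \<le> emeasure M ?L + emeasure M ?U"
    using g D by (intro order_trans[OF emeasure_mono emeasure_subadditive]) auto
  also have "emeasure M ?U \<le> ennreal (1 / c) * (\<integral>\<^sup>+x\<in>D. g x \<partial>M)"
    using g D by (intro nn_integral_Markov_inequality) auto
  finally show ?thesis by (simp add: add_left_mono)
qed

lemma f_dist_less_imp_near_frontier:
  assumes "mono f" "l > 0" "f_dist f F l x < ennreal (f p)"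
  shows "frontier F \<noteq> {} \<and> infdist x (frontier F) < p * l"
proof
  show ne: "frontier F \<noteq> {}" using assms(3) by (auto simp: f_dist_def)
  have "\<not> f p \<le> f (infdist x (frontier F) / l)"
    using assms(3) ne ennreal_leI by (force simp: f_dist_def)
  then have "infdist x (frontier F) / l < p" using assms(1) by (meson monoD not_le)
  then show "infdist x (frontier F) < p * l" using assms(2) by (simp add: field_simps)
qed

lemma emeasure_le_perimeter_plus_f_dist_integral:
  fixes F D :: "'a::euclidean_space set"
  assumes F: "F \<in> sets lebesgue" and fin: "perimeter_in F UNIV < \<infinity>"
    and dens: "perimeter_density_bound F r0 \<theta>" and \<theta>: "\<theta> > 0"
    and \<rho>: "0 < \<rho>" "\<rho> \<le> r0" "\<rho> \<le> p * l" and D: "D \<in> sets lebesgue"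
    and f: "continuous_on UNIV f" "mono f" "f p > 0" and l: "l > 0"
  shows "emeasure lebesgue D
    \<le> ennreal (unit_ball_vol DIM('a) * (3 * (p * l)) ^ DIM('a) / (\<theta> * \<rho> ^ (DIM('a) - 1)))
        * perimeter_in F UNIV
      + ennreal (1 / f p) * (\<integral>\<^sup>+ x \<in> D. f_dist f F l x \<partial>lebesgue)"
proof -
  let ?L = "{x\<in>space lebesgue. f_dist f F l x < ennreal (f p)}"
  have "emeasure lebesgue ?L
      \<le> ennreal (unit_ball_vol DIM('a) * (3 * (p * l)) ^ DIM('a) / (\<theta> * \<rho> ^ (DIM('a) - 1)))
        * perimeter_in F UNIV"
  proof (cases "frontier F = {}")
    case True
    then have "?L = {}" using f_dist_less_imp_near_frontier[OF f(2) l] by blast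
    then show ?thesis by simp
  next
    case False
    have "?L \<subseteq> {x. infdist x (frontier F) < p * l}"
      using f_dist_less_imp_near_frontier[OF f(2) l] by blast
    moreover have "open {x. infdist x (frontier F) < p * l}"
      by (intro open_Collect_less continuous_intros)
    ultimately have "emeasure lebesgue ?L \<le> emeasure lebesgue {x. infdist x (frontier F) < p * l}"
      by (intro emeasure_mono) simp_all
    also note emeasure_frontier_neighbourhood_le[OF F fin dens \<theta> \<rho> False]
    finally show ?thesis .
  qed
  moreover have "emeasure lebesgue D \<le> emeasure lebesgue ?L
      + ennreal (1 / f p) * (\<integral>\<^sup>+ x \<in> D. f_dist f F l x \<partial>lebesgue)"
    using D by (intro emeasure_le_sublevel_plus_Markov borel_measurable_f_dist f)
  ultimately show ?thesis by (meson add_right_mono order_trans)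
qed

lemma emeasure_le_aniso_perimeter_plus_f_dist_integral:
  fixes F D :: "'a::euclidean_space set" and \<phi> :: "'a \<Rightarrow> real" and c_phi \<theta> :: real
  defines "c \<equiv> 10 ^ DIM('a) * measure lebesgue (ball (0::'a) 1) / (c_phi * \<theta>)"
  assumes an: "anisotropy \<phi>" and c_phi: "c_phi > 0" "\<forall>\<xi>. c_phi * norm \<xi> \<le> polar \<phi> \<xi>"
    and F: "F \<in> classS_star" and dens: "perimeter_density_bound F r0 \<theta>" and \<theta>: "\<theta> > 0"
    and \<rho>: "0 < \<rho>" "\<rho> \<le> r0" "\<rho> \<le> p * l" and D: "D \<in> sets lebesgue"
    and f: "Ha f" and p: "p > 0" and l: "l > 0"
    and K: "c * (p * l) ^ DIM('a) / \<rho> ^ (DIM('a) - 1) \<le> K"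
  shows "emeasure lebesgue D
    \<le> ennreal K * aniso_perimeter \<phi> F + ennreal (1 / f p) * (\<integral>\<^sup>+ x \<in> D. f_dist f F l x \<partial>lebesgue)"
proof -
  define n where "n = DIM('a)"
  define K0 where "K0 = unit_ball_vol n * (3 * (p * l)) ^ n / (\<theta> * \<rho> ^ (n - 1))"
  have F': "F \<in> sets lebesgue" "perimeter_in F UNIV < \<infinity>"
    using F unfolding classS_star_def classS_def by auto
  have "strict_mono f" "continuous_on UNIV f" "f 0 = 0"
    using f unfolding Ha_def by (auto dest: spec[of _ 0])
  then have f': "continuous_on UNIV f" "mono f" "f p > 0"
    using p by (auto simp: strict_mono_mono dest: strict_monoD)
  have "K0 \<le> c * (p * l) ^ n / \<rho> ^ (n - 1) * c_phi"
  proof -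
    \<comment> \<open>The covering gives the factor \<open>3\<^sup>n\<close>; the constant of the statement is the cruder \<open>10\<^sup>n\<close>.\<close>
    have "unit_ball_vol n * 3 ^ n \<le> unit_ball_vol n * 10 ^ n"
      by (intro mult_left_mono power_mono) auto
    then show ?thesis
      using \<theta> \<rho> p l c_phi(1) unfolding K0_def c_def n_def
      by (simp add: content_ball power_mult_distrib field_simps)
  qed
  also have "\<dots> \<le> K * c_phi" unfolding n_def using c_phi(1) by (intro mult_right_mono K) simp
  finally have K0: "K0 \<le> K * c_phi" .
  have "0 \<le> c * (p * l) ^ n / \<rho> ^ (n - 1)"
    using \<theta> \<rho> p l c_phi(1) unfolding c_def by simp
  then have "ennreal K0 \<le> ennreal K * ennreal c_phi"
    using K0 K c_phi(1) unfolding n_def by (simp add: ennreal_leI flip: ennreal_mult)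
  then have "ennreal K0 * perimeter_in F UNIV \<le> ennreal K * (ennreal c_phi * perimeter_in F UNIV)"
    by (simp add: mult.assoc[symmetric] mult_right_mono)
  also have "\<dots> \<le> ennreal K * aniso_perimeter \<phi> F"
    using perimeter_in_le_aniso_perimeter[OF an c_phi] by (intro mult_left_mono) auto
  finally show ?thesis
    using emeasure_le_perimeter_plus_f_dist_integral[OF F' dens \<theta> \<rho> D f' l] unfolding K0_def n_def
    by (meson add_right_mono order_trans)
qed

lemma power_divide_power_le:
  fixes p l r :: real
  assumes "0 \<le> p" "0 < l" "l \<le> r" "n \<ge> 1"
  shows "(p * l) ^ n / r ^ (n - 1) \<le> p ^ n * l"
proof -
  obtain k where n: "n = Suc k" using assms(4) by (cases n) auto
  have "(p * l) ^ n / r ^ (n - 1) = p ^ n * l * (l ^ (n - 1) / r ^ (n - 1))"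
    unfolding n by (simp add: power_mult_distrib)
  also have "\<dots> \<le> p ^ n * l * 1"
    using assms(1-3) by (intro mult_left_mono) (simp_all add: divide_le_eq_1 power_mono)
  finally show ?thesis by simp
qed

theorem lemmaA1:
  fixes f :: "real \<Rightarrow> real" and \<phi> :: "'n::euclidean_space \<Rightarrow> real"
    and c_phi r0 theta p l :: real and F E :: "'n set"
  assumes "DIM('n) \<ge> 2"
    and "Ha f"
    and "anisotropy \<phi>"
    and "c_phi > 0" and "\<forall>\<xi>. c_phi * norm \<xi> \<le> polar \<phi> \<xi>"
    and "r0 > 0" and "theta > 0"
    and "F \<in> classS_star"
    and "\<forall>x\<in>frontier F. \<forall>r\<in>{0<..r0}.
           perimeter_in F (ball x r) \<ge> ennreal (theta * r ^ (DIM('n) - 1))"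
    and "E \<in> sets lebesgue"
    and "p > 0" and "l > 0"
  shows "let c = 10 ^ DIM('n) * measure lebesgue (ball (0::'n) 1) / (c_phi * theta);
             n = DIM('n);
             I = ennreal (1 / f p) * (\<integral>\<^sup>+ x \<in> (E - F) \<union> (F - E). f_dist f F l x \<partial>lebesgue)
         in (l > r0 \<and> p * l > r0 \<longrightarrow>
               emeasure lebesgue ((E - F) \<union> (F - E))
                 \<le> ennreal (c * p ^ n * l ^ n / r0 ^ (n - 1)) * aniso_perimeter \<phi> F + I)
          \<and> (l \<le> r0 \<and> p * l > r0 \<longrightarrow>
               emeasure lebesgue ((E - F) \<union> (F - E))
                 \<le> ennreal (c * p ^ n * l) * aniso_perimeter \<phi> F + I)
          \<and> (p * l \<le> r0 \<longrightarrow>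
               emeasure lebesgue ((E - F) \<union> (F - E))
                 \<le> ennreal (c * p * l) * aniso_perimeter \<phi> F + I)"
proof -
  define c where "c = 10 ^ DIM('n) * measure lebesgue (ball (0::'n) 1) / (c_phi * theta)"
  have dens: "perimeter_density_bound F r0 theta"
    using assms(9) unfolding perimeter_density_bound_def .
  have D: "(E - F) \<union> (F - E) \<in> sets lebesgue"
    using assms(8,10) unfolding classS_star_def classS_def by auto
  note estimate = emeasure_le_aniso_perimeter_plus_f_dist_integral[OF assms(3-5,8) dens
      assms(7) _ _ _ D assms(2,11,12), folded c_def]
  have c: "c \<ge> 0" using assms(4,7) unfolding c_def by simp
  have "0 < p * l" using assms(11,12) by simp
  moreover have "c * (p * l) ^ DIM('n) / (p * l) ^ (DIM('n) - 1) = c * p * l"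
  proof -
    have "(p * l) ^ DIM('n) / (p * l) ^ (DIM('n) - 1) = p * l"
      using calculation by (subst power_diff) (auto simp: Suc_leI DIM_positive)
    then show ?thesis by (metis mult.assoc times_divide_eq_right)
  qed
  moreover have "c * (p * l) ^ DIM('n) / r0 ^ (DIM('n) - 1) \<le> c * p ^ DIM('n) * l" if "l \<le> r0"
    using mult_left_mono[OF power_divide_power_le[of p l r0 "DIM('n)"] c] assms(11,12) that
    by (simp add: mult.assoc)
  ultimately show ?thesis
    unfolding Let_def c_def[symmetric] using assms(6) estimate
    by (auto simp: power_mult_distrib mult.assoc)
qed

end
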